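(* Let $f$ be a continuous $1$-periodic function on $\mathbb{R}^n$, and let $\{g_m\}_{m\in\mathbb{N}}$ be a uniformly bounded sequence of continuous $1$-periodic functions on $\mathbb{R}^n$ converging pointwise to a function $g$ on $\mathbb{R}^n$. Let $\{\epsilon_m\}$ be a sequence of positive real numbers with $\epsilon_m\to0$. Then $$\lim_{m\to\infty}\epsilon_m^{n/2}\int_{\mathbb{R}^n}e^{-\pi\epsilon_m|x|^2}f(x)g_m(x)\,dx=\int_{\mathbb{T}^n}f(x)g(x)\,dx.$$
   Context: $1$-periodic means $h(x+k)=h(x)$ for all $x\in\mathbb{R}^n$, $k\in\mathbb{Z}^n$; $\int_{\mathbb{T}^n}$ denotes the integral over the unit cube $[0,1)^n$ (a fundamental domain of $\mathbb{T}^n=\mathbb{R}^n/\mathbb{Z}^n$). *)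

theory Defs
  imports "HOL-Analysis.Analysis"
begin

definition periodic1 :: "(real ^ 'n \<Rightarrow> 'b) \<Rightarrow> bool" where
  "periodic1 h \<longleftrightarrow> (\<forall>x k. (\<forall>i. k $ i \<in> \<int>) \<longrightarrow> h (x + k) = h x)"

text \<open>The fundamental domain [0,1)^n of the torus.\<close>
definition unit_cube :: "(real ^ 'n) set" where
  "unit_cube = {x. \<forall>i. 0 \<le> x $ i \<and> x $ i < 1}"

end

theory Submission
  imports Defs "HOL-Probability.Distributions"
begin

(* Put s = sqrt eps, so that the kernel eps^(n/2) exp(-pi eps |x|^2) is w(x) = s^n G(s x) with
   G(u) = exp(-pi |u|^2), a probability density.  For a bounded periodic h, Fubini and the
   translation invariance of means over the torus give
     int_T h = int_T int w(z) h(x + z) dz dx,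
   hence |int w h - int_T h| <= sup |h| * int_T ||w - w(. - x)||_1 dx
                            = sup |h| * int_T ||G(. - s x) - G||_1 dx,
   which tends to 0 as s -> 0 by L1-continuity of translation.  For h = f g_m it remains to
   note that int_T f g_m -> int_T f g by dominated convergence. *)

lemma lborel_integral_affine:
  fixes f :: "'a::euclidean_space \<Rightarrow> 'b::{banach, second_countable_topology}"
  assumes [measurable]: "f \<in> borel_measurable borel" and c: "c \<noteq> 0"
  shows "(\<integral>x. f x \<partial>lborel) = \<bar>c\<bar> ^ DIM('a) *\<^sub>R (\<integral>x. f (t + c *\<^sub>R x) \<partial>lborel)"
proof -
  have "(\<integral>x. f x \<partial>lborel)
      = (\<integral>x. f x \<partial>density (distr lborel borel (\<lambda>x. t + c *\<^sub>R x)) (\<lambda>_. \<bar>c\<bar> ^ DIM('a)))"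
    by (subst lborel_affine[OF c, of t]) (rule refl)
  also have "\<dots> = \<bar>c\<bar> ^ DIM('a) *\<^sub>R (\<integral>x. f (t + c *\<^sub>R x) \<partial>lborel)"
    by (simp add: integral_density integral_distr)
  finally show ?thesis .
qed

lemma lborel_integrable_affine:
  fixes f :: "'a::euclidean_space \<Rightarrow> 'b::{banach, second_countable_topology}"
  assumes f: "integrable lborel f" and c: "c \<noteq> 0"
  shows "integrable lborel (\<lambda>x. f (t + c *\<^sub>R x))"
proof -
  have [measurable]: "f \<in> borel_measurable borel"
    using f by auto
  have "integrable (density (distr lborel borel (\<lambda>x. t + c *\<^sub>R x)) (\<lambda>_. \<bar>c\<bar> ^ DIM('a))) f"
    using f by (subst (asm) lborel_affine[OF c, of t])
  then have "integrable lborel (\<lambda>x. \<bar>c\<bar> ^ DIM('a) *\<^sub>R f (t + c *\<^sub>R x))"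
    by (simp add: integrable_density integrable_distr_eq)
  then have "integrable lborel
      (\<lambda>x. inverse (\<bar>c\<bar> ^ DIM('a)) *\<^sub>R (\<bar>c\<bar> ^ DIM('a) *\<^sub>R f (t + c *\<^sub>R x)))"
    by (rule integrable_scaleR_right)
  with c show ?thesis
    by simp
qed

corollary lborel_integral_translate:
  fixes f :: "'a::euclidean_space \<Rightarrow> 'b::{banach, second_countable_topology}"
  assumes "f \<in> borel_measurable borel"
  shows "(\<integral>x. f (a + x) \<partial>lborel) = (\<integral>x. f x \<partial>lborel)"
  unfolding lborel_integral_affine[OF assms one_neq_zero, of a] by simp

corollary lborel_integrable_translate:
  fixes f :: "'a::euclidean_space \<Rightarrow> 'b::{banach, second_countable_topology}"
  assumes "integrable lborel f"
  shows "integrable lborel (\<lambda>x. f (a + x))"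
  using lborel_integrable_affine[OF assms one_neq_zero, of a] by simp

lemma integrable_mult_bounded:
  fixes w h :: "'a \<Rightarrow> real"
  assumes w: "integrable M w" and [measurable]: "h \<in> borel_measurable M"
    and h_le: "\<And>x. \<bar>h x\<bar> \<le> B"
  shows "integrable M (\<lambda>x. w x * h x)"
proof (rule Bochner_Integration.integrable_bound[of M "\<lambda>x. B * w x"])
  show "integrable M (\<lambda>x. B * w x)"
    using w by simp
  show "(\<lambda>x. w x * h x) \<in> borel_measurable M"
    using w by measurable
  show "AE x in M. norm (w x * h x) \<le> norm (B * w x)"
  proof (rule AE_I2)
    fix x
    have "\<bar>h x\<bar> * \<bar>w x\<bar> \<le> \<bar>B\<bar> * \<bar>w x\<bar>"
      by (intro mult_right_mono order_trans[OF h_le abs_ge_self]) simp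
    then show "norm (w x * h x) \<le> norm (B * w x)"
      by (simp add: abs_mult mult.commute)
  qed
qed

lemma set_integrable_bounded:
  fixes h :: "'a \<Rightarrow> real"
  assumes "A \<in> sets M" "emeasure M A < \<infinity>" and "h \<in> borel_measurable M" and "\<And>x. \<bar>h x\<bar> \<le> B"
  shows "set_integrable M A h"
  using assms unfolding set_integrable_def
  by (auto intro!: integrable_mult_bounded[OF integrable_real_indicator])

lemma tendsto_set_integral_bounded:
  fixes h :: "nat \<Rightarrow> 'a \<Rightarrow> real"
  assumes A: "A \<in> sets M" "emeasure M A < \<infinity>"
    and [measurable]: "\<And>m. h m \<in> borel_measurable M" and h_le: "\<And>m x. \<bar>h m x\<bar> \<le> B"
    and lim: "\<And>x. (\<lambda>m. h m x) \<longlonglongrightarrow> h0 x"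
  shows "set_integrable M A h0"
    and "(\<lambda>m. LINT x:A|M. h m x) \<longlonglongrightarrow> (LINT x:A|M. h0 x)"
proof -
  have [measurable]: "h0 \<in> borel_measurable M"
    by (rule borel_measurable_LIMSEQ_real[OF lim]) simp
  have "\<bar>h0 x\<bar> \<le> B" for x
    using h_le by (intro tendsto_le[OF _ tendsto_const tendsto_rabs[OF lim]]) auto
  then show "set_integrable M A h0"
    using A by (intro set_integrable_bounded) auto
  show "(\<lambda>m. LINT x:A|M. h m x) \<longlonglongrightarrow> (LINT x:A|M. h0 x)"
    unfolding set_lebesgue_integral_def
  proof (rule integral_dominated_convergence[where w="\<lambda>x. B * indicator A x"])
    show "integrable M (\<lambda>x. B * indicator A x)"
      using A by (intro integrable_mult_right integrable_real_indicator)
    show "AE x in M. (\<lambda>m. indicator A x *\<^sub>R h m x) \<longlonglongrightarrow> indicator A x *\<^sub>R h0 x"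
      by (intro AE_I2 tendsto_scaleR tendsto_const lim)
    show "AE x in M. norm (indicator A x *\<^sub>R h m x) \<le> B * indicator A x" for m
      using h_le by (intro AE_I2) (auto simp: indicator_def)
  qed (use A in auto)
qed

lemma (in pair_sigma_finite) integrable_mult_pair:
  fixes f :: "'a \<Rightarrow> real" and g :: "'b \<Rightarrow> real"
  assumes f: "integrable M1 f" and g: "integrable M2 g"
  shows "integrable (M1 \<Otimes>\<^sub>M M2) (\<lambda>(x, y). f x * g y)"
proof -
  have [measurable]: "f \<in> borel_measurable M1" "g \<in> borel_measurable M2"
    using f g by auto
  have "(\<integral>\<^sup>+p. ennreal (norm (case p of (x, y) \<Rightarrow> f x * g y)) \<partial>(M1 \<Otimes>\<^sub>M M2))
      = (\<integral>\<^sup>+x. \<integral>\<^sup>+y. ennreal \<bar>f x\<bar> * ennreal \<bar>g y\<bar> \<partial>M2 \<partial>M1)"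
    by (subst M2.nn_integral_fst[symmetric]) (auto simp: abs_mult ennreal_mult)
  also have "\<dots> = (\<integral>\<^sup>+x. ennreal \<bar>f x\<bar> \<partial>M1) * (\<integral>\<^sup>+y. ennreal \<bar>g y\<bar> \<partial>M2)"
    by (simp add: nn_integral_cmult nn_integral_multc)
  also have "\<dots> < \<infinity>"
    using f g by (simp add: integrable_iff_bounded ennreal_mult_less_top)
  finally show ?thesis
    by (simp add: integrable_iff_bounded)
qed

lemma integral_abs_translate_diff_le:
  fixes w :: "'a::euclidean_space \<Rightarrow> real"
  assumes w: "integrable lborel w"
  shows "(\<integral>z. \<bar>w z - w (z - x)\<bar> \<partial>lborel) \<le> 2 * (\<integral>z. \<bar>w z\<bar> \<partial>lborel)"
proof -
  have [measurable]: "w \<in> borel_measurable borel"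
    using w by auto
  have w_shift: "integrable lborel (\<lambda>z. w (z - x))"
    using lborel_integrable_translate[OF w, of "- x"] by simp
  have "(\<integral>z. \<bar>w z - w (z - x)\<bar> \<partial>lborel) \<le> (\<integral>z. \<bar>w z\<bar> + \<bar>w (z - x)\<bar> \<partial>lborel)"
    using w w_shift by (intro integral_mono) auto
  also have "\<dots> = 2 * (\<integral>z. \<bar>w z\<bar> \<partial>lborel)"
    using w w_shift lborel_integral_translate[of "\<lambda>z. \<bar>w z\<bar>" "- x"] by simp
  finally show ?thesis .
qed

lemma abs_integral_mult_translate_diff_le:
  fixes w h :: "'a::euclidean_space \<Rightarrow> real"
  assumes w: "integrable lborel w"
    and [measurable]: "h \<in> borel_measurable borel" and h_le: "\<And>x. \<bar>h x\<bar> \<le> M"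
  shows "\<bar>(\<integral>z. w z * h z \<partial>lborel) - (\<integral>z. w z * h (x + z) \<partial>lborel)\<bar>
    \<le> M * (\<integral>z. \<bar>w z - w (z - x)\<bar> \<partial>lborel)"
proof -
  have [measurable]: "w \<in> borel_measurable borel"
    using w by auto
  have w_shift: "integrable lborel (\<lambda>z. w (z - x))"
    using lborel_integrable_translate[OF w, of "- x"] by simp
  have "(\<integral>z. w z * h (x + z) \<partial>lborel) = (\<integral>z. w (z - x) * h z \<partial>lborel)"
    using lborel_integral_translate[of "\<lambda>z. w (z - x) * h z" x] by simp
  then have "(\<integral>z. w z * h z \<partial>lborel) - (\<integral>z. w z * h (x + z) \<partial>lborel)
      = (\<integral>z. (w z - w (z - x)) * h z \<partial>lborel)"
    using integrable_mult_bounded[OF w _ h_le] integrable_mult_bounded[OF w_shift _ h_le]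
    by (simp add: left_diff_distrib)
  also have "\<bar>\<dots>\<bar> \<le> (\<integral>z. M * \<bar>w z - w (z - x)\<bar> \<partial>lborel)"
  proof (rule integral_abs_bound_integral)
    show "integrable lborel (\<lambda>z. (w z - w (z - x)) * h z)"
      using w w_shift by (intro integrable_mult_bounded[OF _ _ h_le]) auto
    show "integrable lborel (\<lambda>z. M * \<bar>w z - w (z - x)\<bar>)"
      using w w_shift by auto
    show "\<bar>(w z - w (z - x)) * h z\<bar> \<le> M * \<bar>w z - w (z - x)\<bar>" for z
      using h_le[of z] by (simp add: abs_mult mult.commute mult_right_mono)
  qed
  finally show ?thesis
    by simp
qed

lemma tendsto_integral_abs_translate_diff:
  fixes w :: "'a::euclidean_space \<Rightarrow> real" and a :: "nat \<Rightarrow> 'a"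
  assumes w: "integrable lborel w" and w_cont: "continuous_on UNIV w" and w_nonneg: "\<And>x. 0 \<le> w x"
    and a: "a \<longlonglongrightarrow> 0"
  shows "(\<lambda>k. \<integral>u. \<bar>w (u - a k) - w u\<bar> \<partial>lborel) \<longlonglongrightarrow> 0"
proof -
  have [measurable]: "w \<in> borel_measurable borel"
    using w by auto
  have w_shift: "integrable lborel (\<lambda>u. w (u - a k))" for k
    using lborel_integrable_translate[OF w, of "- a k"] by simp
  have shift_eq: "(\<integral>u. w (u - a k) \<partial>lborel) = (\<integral>u. w u \<partial>lborel)" for k
    using lborel_integral_translate[of w "- a k"] by simp
  \<comment> \<open>\<open>\<bar>p - q\<bar> = p + q - 2 min p q\<close> reduces the claim to dominated convergence of the minima.\<close>
  have abs_eq: "(\<integral>u. \<bar>w (u - a k) - w u\<bar> \<partial>lborel)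
      = 2 * (\<integral>u. w u \<partial>lborel) - 2 * (\<integral>u. min (w (u - a k)) (w u) \<partial>lborel)" for k
  proof -
    have "(\<integral>u. \<bar>w (u - a k) - w u\<bar> \<partial>lborel)
        = (\<integral>u. w (u - a k) + w u - 2 * min (w (u - a k)) (w u) \<partial>lborel)"
      by (intro Bochner_Integration.integral_cong) auto
    then show ?thesis
      using shift_eq[of k] w w_shift[of k] integrable_min[OF w_shift[of k] w] by simp
  qed
  have "(\<lambda>k. \<integral>u. min (w (u - a k)) (w u) \<partial>lborel) \<longlonglongrightarrow> (\<integral>u. w u \<partial>lborel)"
  proof (rule integral_dominated_convergence[where w=w])
    show "AE u in lborel. (\<lambda>k. min (w (u - a k)) (w u)) \<longlonglongrightarrow> w u"
    proof (rule AE_I2)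
      fix u
      have "(\<lambda>k. w (u - a k)) \<longlonglongrightarrow> w (u - 0)"
        by (intro continuous_on_tendsto_compose[OF w_cont] tendsto_intros a) auto
      then show "(\<lambda>k. min (w (u - a k)) (w u)) \<longlonglongrightarrow> w u"
        using tendsto_min[of _ "w u" sequentially "\<lambda>_. w u" "w u"] by simp
    qed
  qed (use w w_nonneg in auto)
  then have "(\<lambda>k. 2 * (\<integral>u. w u \<partial>lborel) - 2 * (\<integral>u. min (w (u - a k)) (w u) \<partial>lborel))
      \<longlonglongrightarrow> 2 * (\<integral>u. w u \<partial>lborel) - 2 * (\<integral>u. w u \<partial>lborel)"
    by (intro tendsto_intros)
  then show ?thesis
    by (simp add: abs_eq)
qed

definition gauss :: "'a::real_normed_vector \<Rightarrow> real" where
  "gauss u = exp (- pi * (norm u)\<^sup>2)"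

lemma gauss_nonneg: "0 \<le> gauss u"
  by (simp add: gauss_def)

lemma borel_measurable_gauss[measurable]: "gauss \<in> borel_measurable borel"
  unfolding gauss_def by measurable

lemma continuous_on_gauss: "continuous_on UNIV gauss"
  unfolding gauss_def by (intro continuous_intros)

lemma nn_integral_exp_minus_pi_square: "(\<integral>\<^sup>+x. ennreal (exp (- pi * x\<^sup>2)) \<partial>lborel) = 1"
proof -
  define \<sigma> where "\<sigma> = 1 / sqrt (2 * pi)"
  have \<sigma>: "\<sigma> > 0" "\<sigma>\<^sup>2 = 1 / (2 * pi)"
    by (simp_all add: \<sigma>_def power_divide)
  then have "normal_density 0 \<sigma> x = exp (- pi * x\<^sup>2)" for x
    by (simp add: normal_density_def)
  moreover have "(\<integral>\<^sup>+x. ennreal (normal_density 0 \<sigma> x) \<partial>lborel) = 1"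
    using \<sigma> by (subst nn_integral_eq_integral) auto
  ultimately show ?thesis
    by simp
qed

lemma nn_integral_gauss: "(\<integral>\<^sup>+x. ennreal (gauss (x :: 'a::euclidean_space)) \<partial>lborel) = 1"
proof -
  have "gauss x = (\<Prod>b\<in>Basis. exp (- pi * (x \<bullet> b)\<^sup>2))" for x :: 'a
  proof -
    have "(norm x)\<^sup>2 = (\<Sum>b\<in>Basis. (x \<bullet> b)\<^sup>2)"
      by (subst power2_norm_eq_inner, subst euclidean_inner) (simp add: power2_eq_square)
    then show ?thesis
      by (simp add: gauss_def sum_distrib_left exp_sum)
  qed
  then have factorise: "ennreal (gauss x) = (\<Prod>b\<in>Basis. ennreal (exp (- pi * (x \<bullet> b)\<^sup>2)))"
    for x :: 'a
    by (simp add: prod_ennreal)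
  have "(\<integral>\<^sup>+x. ennreal (gauss (x::'a)) \<partial>lborel)
      = (\<integral>\<^sup>+x. (\<Prod>b\<in>Basis. ennreal (exp (- pi * ((x::'a) \<bullet> b)\<^sup>2))) \<partial>lborel)"
    by (simp only: factorise)
  also have "\<dots> = (\<Prod>b\<in>(Basis::'a set). \<integral>\<^sup>+x. ennreal (exp (- pi * x\<^sup>2)) \<partial>lborel)"
    by (rule nn_integral_lborel_prod) auto
  also have "\<dots> = 1"
    unfolding nn_integral_exp_minus_pi_square by simp
  finally show ?thesis .
qed

lemma integrable_gauss: "integrable lborel (gauss :: 'a::euclidean_space \<Rightarrow> real)"
  using nn_integral_gauss[where 'a='a] by (intro integrableI_nonneg) (auto simp: gauss_nonneg)

lemma integral_gauss: "(\<integral>x. gauss (x :: 'a::euclidean_space) \<partial>lborel) = 1"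
  using nn_integral_eq_integral[OF integrable_gauss[where 'a='a]] nn_integral_gauss[where 'a='a]
  by (simp add: gauss_nonneg integral_nonneg_AE)

lemma periodic1_add_int:
  assumes "periodic1 h" and "\<And>i. k $ i \<in> \<int>"
  shows "h (x + k) = h x"
  using assms unfolding periodic1_def by blast

lemma periodic1_diff_int:
  assumes "periodic1 h" and "\<And>i. k $ i \<in> \<int>"
  shows "h (x - k) = h x"
  using periodic1_add_int[OF assms(1), of "- k" x] assms(2) by simp

lemma periodic1_mult:
  fixes f g :: "real ^ 'n \<Rightarrow> 'a::times"
  assumes "periodic1 f" and "periodic1 g"
  shows "periodic1 (\<lambda>x. f x * g x)"
  using assms unfolding periodic1_def by simp

lemma floor_vec_decomposition:
  fixes x :: "real ^ 'n"
  obtains r k where "x = r + k" "\<And>i. k $ i \<in> \<int>" "\<And>i. 0 \<le> r $ i \<and> r $ i < 1"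
proof -
  define k :: "real ^ 'n" where "k = (\<chi> i. of_int \<lfloor>x $ i\<rfloor>)"
  have "0 \<le> (x - k) $ i \<and> (x - k) $ i < 1" for i
    by (simp add: k_def) linarith
  then show ?thesis
    by (intro that[of "x - k" k]) (simp_all add: k_def)
qed

lemma periodic1_bounded:
  fixes f :: "real ^ 'n \<Rightarrow> 'a::real_normed_vector"
  assumes f: "continuous_on UNIV f" and per: "periodic1 f"
  shows "bounded (range f)"
proof (rule bounded_subset)
  show "bounded (f ` cbox 0 1)"
    by (intro compact_imp_bounded compact_continuous_image continuous_on_subset[OF f]) auto
  show "range f \<subseteq> f ` cbox 0 1"
  proof clarify
    fix x :: "real ^ 'n"
    obtain r k where "x = r + k" "\<And>i. k $ i \<in> \<int>" "\<And>i. 0 \<le> r $ i \<and> r $ i < 1"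
      using floor_vec_decomposition[of x] by metis
    then have "f x = f r" and "r \<in> cbox 0 1"
      using periodic1_add_int[OF per] by (auto simp: mem_box_cart less_imp_le)
    then show "f x \<in> f ` cbox 0 1"
      by blast
  qed
qed

definition unit_cube_at :: "real ^ 'n \<Rightarrow> (real ^ 'n) set" where
  "unit_cube_at x = {y. \<forall>i. x $ i \<le> y $ i \<and> y $ i < x $ i + 1}"

lemma unit_cube_at_0: "unit_cube_at 0 = unit_cube"
  by (simp add: unit_cube_at_def unit_cube_def)

lemma sets_unit_cube_at[measurable]: "unit_cube_at x \<in> sets borel"
  unfolding unit_cube_at_def by measurable

lemma sets_unit_cube[measurable]: "unit_cube \<in> sets borel"
  using sets_unit_cube_at[of 0] by (simp add: unit_cube_at_0)

lemma emeasure_unit_cube_at_finite: "emeasure lborel (unit_cube_at x) < \<infinity>"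
proof -
  have "unit_cube_at x \<subseteq> cbox x (x + 1)"
    by (auto simp: unit_cube_at_def mem_box_cart less_imp_le)
  then show ?thesis
    by (intro le_less_trans[OF emeasure_mono emeasure_compact_finite]) auto
qed

lemma emeasure_unit_cube: "emeasure lborel (unit_cube :: (real ^ 'n) set) = 1"
proof -
  have one: "(1 :: real ^ 'n) \<bullet> b = 1" if "b \<in> Basis" for b
    using that by (auto simp: Basis_vec_def cart_eq_inner_axis[symmetric])
  have "box 0 1 \<subseteq> (unit_cube :: (real ^ 'n) set)" "unit_cube \<subseteq> cbox (0 :: real ^ 'n) 1"
    by (auto simp: unit_cube_def mem_box_cart less_imp_le)
  then have "emeasure lborel (box 0 (1 :: real ^ 'n)) \<le> emeasure lborel (unit_cube :: (real ^ 'n) set)"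
    and "emeasure lborel (unit_cube :: (real ^ 'n) set) \<le> emeasure lborel (cbox 0 (1 :: real ^ 'n))"
    by (auto intro!: emeasure_mono)
  moreover have "emeasure lborel (box 0 (1 :: real ^ 'n)) = 1"
    and "emeasure lborel (cbox 0 (1 :: real ^ 'n)) = 1"
    by (simp_all add: emeasure_lborel_box emeasure_lborel_cbox one)
  ultimately show ?thesis
    by simp
qed

lemma emeasure_unit_cube_finite: "emeasure lborel (unit_cube :: (real ^ 'n) set) < \<infinity>"
  by (simp add: emeasure_unit_cube)

lemma measure_unit_cube: "measure lborel (unit_cube :: (real ^ 'n) set) = 1"
  by (simp add: measure_def emeasure_unit_cube)

lemma set_integral_unit_cube_at_add_int:
  fixes h :: "real ^ 'n \<Rightarrow> real"
  assumes [measurable]: "h \<in> borel_measurable borel" and per: "periodic1 h"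
    and k: "\<And>i. k $ i \<in> \<int>"
  shows "(LINT y:unit_cube_at (x + k)|lborel. h y) = (LINT y:unit_cube_at x|lborel. h y)"
proof -
  have "(LINT y:unit_cube_at (x + k)|lborel. h y)
      = (\<integral>y. indicator (unit_cube_at (x + k)) (k + y) * h (k + y) \<partial>lborel)"
    unfolding set_lebesgue_integral_def
    by simp (rule lborel_integral_translate[symmetric]; measurable)
  also have "\<dots> = (LINT y:unit_cube_at x|lborel. h y)"
    using periodic1_add_int[OF per k]
    by (simp add: set_lebesgue_integral_def unit_cube_at_def indicator_def add.commute)
  finally show ?thesis .
qed

text \<open>The cube shifted by \<open>t \<le> 1\<close> along an axis consists of the part of the old cube above
  height \<open>t\<close> and the part below it moved up by one period.\<close>
lemma set_integral_unit_cube_at_add_axis: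
  fixes h :: "real ^ 'n \<Rightarrow> real"
  assumes [measurable]: "h \<in> borel_measurable borel" and h_le: "\<And>x. \<bar>h x\<bar> \<le> M"
    and per: "periodic1 h" and t: "0 \<le> t" "t \<le> 1"
  shows "(LINT y:unit_cube_at (x + t *\<^sub>R axis i 1)|lborel. h y)
    = (LINT y:unit_cube_at x|lborel. h y)"
proof -
  define e :: "real ^ 'n" where "e = axis i 1"
  define A where "A = {z \<in> unit_cube_at x. x $ i + t \<le> z $ i}"
  define B where "B = {z \<in> unit_cube_at x. z $ i < x $ i + t}"
  have e: "e $ j = (if j = i then 1 else 0)" for j
    by (simp add: e_def axis_def)
  have [measurable]: "A \<in> sets borel" "B \<in> sets borel"
    unfolding A_def B_def by measurable
  have "emeasure lborel A < \<infinity>" "emeasure lborel B < \<infinity>"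
    unfolding A_def B_def
    by (intro le_less_trans[OF emeasure_mono emeasure_unit_cube_at_finite[of x]]; auto)+
  then have int_A: "integrable lborel (\<lambda>y. indicator A y * h y)"
    and int_B: "integrable lborel (\<lambda>y. indicator B y * h y)"
    by (auto intro!: integrable_mult_bounded[OF _ _ h_le])
  have "h (y - e) = h y" for y
    by (rule periodic1_diff_int[OF per]) (simp add: e)
  moreover have "indicator (unit_cube_at (x + t *\<^sub>R e)) y
      = (indicator A y + indicator B (y - e) :: real)" for y
  proof -
    let ?others = "\<forall>j. j \<noteq> i \<longrightarrow> x $ j \<le> y $ j \<and> y $ j < x $ j + 1"
    have "y \<in> unit_cube_at (x + t *\<^sub>R e) \<longleftrightarrow> ?others \<and> x $ i + t \<le> y $ i \<and> y $ i < x $ i + t + 1"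
      using t by (auto simp: unit_cube_at_def e)
    moreover have "y \<in> A \<longleftrightarrow> ?others \<and> x $ i + t \<le> y $ i \<and> y $ i < x $ i + 1"
      using t by (auto simp: A_def unit_cube_at_def) (metis order_trans le_add_same_cancel1)
    moreover have "y - e \<in> B \<longleftrightarrow> ?others \<and> x $ i + 1 \<le> y $ i \<and> y $ i < x $ i + t + 1"
      using t by (auto simp: B_def unit_cube_at_def e)
    ultimately show ?thesis
      using t by (auto simp: indicator_def)
  qed
  ultimately have "(LINT y:unit_cube_at (x + t *\<^sub>R e)|lborel. h y)
      = (\<integral>y. indicator A y * h y + indicator B (y - e) * h (y - e) \<partial>lborel)"
    by (simp add: set_lebesgue_integral_def distrib_right)
  also have "\<dots> = (\<integral>y. indicator A y * h y \<partial>lborel) + (\<integral>y. indicator B y * h y \<partial>lborel)"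
    using lborel_integrable_translate[OF int_B, of "- e"]
      lborel_integral_translate[of "\<lambda>y. indicator B y * h y" "- e"]
    by (simp add: Bochner_Integration.integral_add[OF int_A])
  also have "\<dots> = (LINT y:unit_cube_at x|lborel. h y)"
  proof -
    have "indicator (unit_cube_at x) y = (indicator A y + indicator B y :: real)" for y
      by (auto simp: A_def B_def indicator_def)
    then show ?thesis
      by (simp add: set_lebesgue_integral_def distrib_right
          Bochner_Integration.integral_add[OF int_A int_B])
  qed
  finally show ?thesis
    by (simp add: e_def)
qed

lemma set_integral_unit_cube_at_periodic:
  fixes h :: "real ^ 'n \<Rightarrow> real"
  assumes [measurable]: "h \<in> borel_measurable borel" and h_le: "\<And>x. \<bar>h x\<bar> \<le> M"
    and per: "periodic1 h"
  shows "(LINT y:unit_cube_at x|lborel. h y) = (LINT y:unit_cube|lborel. h y)"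
proof -
  define \<Phi> where "\<Phi> x = (LINT y:unit_cube_at x|lborel. h y)" for x
  obtain r k where x: "x = r + k" and k: "\<And>i. k $ i \<in> \<int>" and r: "\<And>i. 0 \<le> r $ i \<and> r $ i < 1"
    using floor_vec_decomposition[of x] by metis
  have "\<Phi> (\<Sum>i\<in>S. r $ i *\<^sub>R axis i 1) = \<Phi> 0" if "finite S" for S
    using that
  proof (induction S rule: finite_induct)
    case (insert j S)
    have "\<Phi> (\<Sum>i\<in>insert j S. r $ i *\<^sub>R axis i 1)
        = \<Phi> ((\<Sum>i\<in>S. r $ i *\<^sub>R axis i 1) + r $ j *\<^sub>R axis j 1)"
      using insert by (simp add: add.commute)
    also have "\<dots> = \<Phi> (\<Sum>i\<in>S. r $ i *\<^sub>R axis i 1)"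
      unfolding \<Phi>_def using r[of j]
      by (intro set_integral_unit_cube_at_add_axis[OF _ h_le per]) auto
    finally show ?case
      using insert by simp
  qed simp
  moreover have "r = (\<Sum>i\<in>UNIV. r $ i *\<^sub>R axis i 1)"
    using basis_expansion[of r] by (simp add: scalar_mult_eq_scaleR)
  ultimately have "\<Phi> r = \<Phi> 0"
    by (metis finite)
  moreover have "\<Phi> x = \<Phi> r"
    unfolding \<Phi>_def x by (rule set_integral_unit_cube_at_add_int[OF _ per k]) simp
  ultimately show ?thesis
    by (simp add: \<Phi>_def unit_cube_at_0)
qed

lemma set_integral_unit_cube_translate:
  fixes h :: "real ^ 'n \<Rightarrow> real"
  assumes [measurable]: "h \<in> borel_measurable borel" and h_le: "\<And>x. \<bar>h x\<bar> \<le> M"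
    and per: "periodic1 h"
  shows "(LINT y:unit_cube|lborel. h (x + y)) = (LINT y:unit_cube|lborel. h y)"
proof -
  have "(LINT y:unit_cube|lborel. h (x + y))
      = (\<integral>y. indicator (unit_cube_at x) (x + y) * h (x + y) \<partial>lborel)"
    unfolding set_lebesgue_integral_def
    by (intro Bochner_Integration.integral_cong)
      (auto simp: unit_cube_def unit_cube_at_def indicator_def)
  also have "\<dots> = (LINT y:unit_cube_at x|lborel. h y)"
    unfolding set_lebesgue_integral_def by simp (rule lborel_integral_translate; measurable)
  finally show ?thesis
    using set_integral_unit_cube_at_periodic[OF _ h_le per] by simp
qed

lemma set_integral_unit_cube_weighted_translates:
  fixes w h :: "real ^ 'n \<Rightarrow> real"
  assumes w: "integrable lborel w"
    and [measurable]: "h \<in> borel_measurable borel" and h_le: "\<And>x. \<bar>h x\<bar> \<le> M"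
    and per: "periodic1 h"
  shows "(\<integral>z. w z \<partial>lborel) * (LINT x:unit_cube|lborel. h x)
    = (LINT x:unit_cube|lborel. \<integral>z. w z * h (x + z) \<partial>lborel)"
proof -
  have [measurable]: "w \<in> borel_measurable borel"
    using w by auto
  define F where "F x z = indicator unit_cube x * (w z * h (x + z))" for x z :: "real ^ 'n"
  have "integrable (lborel \<Otimes>\<^sub>M lborel) (\<lambda>(x :: real ^ 'n, z). indicator unit_cube x * w z)"
    by (intro lborel_pair.integrable_mult_pair w integrable_real_indicator emeasure_unit_cube_finite)
      simp
  then have "integrable (lborel \<Otimes>\<^sub>M lborel)
      (\<lambda>p. (case p of (x, z) \<Rightarrow> indicator unit_cube x * w z) * h (fst p + snd p))"
    by (rule integrable_mult_bounded[OF _ _ h_le]) measurable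
  then have "integrable (lborel \<Otimes>\<^sub>M lborel) (case_prod F)"
    by (simp add: F_def case_prod_beta' mult.assoc)
  then have "(\<integral>z. (\<integral>x. F x z \<partial>lborel) \<partial>lborel) = (\<integral>x. (\<integral>z. F x z \<partial>lborel) \<partial>lborel)"
    by (rule lborel_pair.Fubini_integral)
  moreover have "(\<integral>x. F x z \<partial>lborel) = w z * (LINT x:unit_cube|lborel. h x)" for z
    using set_integral_unit_cube_translate[OF _ h_le per, of z]
    by (simp add: F_def set_lebesgue_integral_def add.commute mult.left_commute)
  ultimately show ?thesis
    by (simp add: F_def set_lebesgue_integral_def)
qed

lemma abs_integral_mult_periodic_diff_le:
  fixes w h :: "real ^ 'n \<Rightarrow> real"
  assumes w: "integrable lborel w" and w_1: "(\<integral>z. w z \<partial>lborel) = 1"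
    and h_meas[measurable]: "h \<in> borel_measurable borel" and h_le: "\<And>x. \<bar>h x\<bar> \<le> M"
    and per: "periodic1 h"
  shows "\<bar>(\<integral>z. w z * h z \<partial>lborel) - (LINT x:unit_cube|lborel. h x)\<bar>
    \<le> M * (LINT x:unit_cube|lborel. \<integral>z. \<bar>w z - w (z - x)\<bar> \<partial>lborel)"
proof -
  have [measurable]: "w \<in> borel_measurable borel"
    using w by auto
  define I where "I = (\<integral>z. w z * h z \<partial>lborel)"
  define A where "A x = (\<integral>z. w z * h (x + z) \<partial>lborel)" for x
  define D where "D x = (\<integral>z. \<bar>w z - w (z - x)\<bar> \<partial>lborel)" for x
  have cube: "integrable lborel (indicator unit_cube :: real ^ 'n \<Rightarrow> real)"
    by (intro integrable_real_indicator emeasure_unit_cube_finite) simp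
  have "\<bar>A x\<bar> \<le> (\<integral>z. M * \<bar>w z\<bar> \<partial>lborel)" for x
    unfolding A_def using w h_le
    by (intro integral_abs_bound_integral integrable_mult_bounded[OF w _ h_le])
      (auto simp: abs_mult intro: order_trans[OF mult_left_mono[OF h_le] eq_refl])
  then have int_A: "integrable lborel (\<lambda>x. indicator unit_cube x * A x)"
    by (intro integrable_mult_bounded[OF cube]) (auto simp: A_def)
  have "\<bar>D x\<bar> \<le> 2 * (\<integral>z. \<bar>w z\<bar> \<partial>lborel)" for x
    unfolding D_def using integral_abs_translate_diff_le[OF w] by simp
  then have int_D: "integrable lborel (\<lambda>x. indicator unit_cube x * D x)"
    by (intro integrable_mult_bounded[OF cube]) (auto simp: D_def)
  have "(LINT x:unit_cube|lborel. h x) = (\<integral>x. indicator unit_cube x * A x \<partial>lborel)"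
    using set_integral_unit_cube_weighted_translates[OF w _ h_le per]
    by (simp add: w_1 A_def set_lebesgue_integral_def)
  moreover have "I = (\<integral>x. indicator unit_cube x * I \<partial>lborel)"
    by (simp add: measure_unit_cube)
  ultimately have "I - (LINT x:unit_cube|lborel. h x)
      = (\<integral>x. indicator unit_cube x * (I - A x) \<partial>lborel)"
    using cube int_A by (simp add: right_diff_distrib)
  also have "\<bar>\<dots>\<bar> \<le> (\<integral>x. indicator unit_cube x * (M * D x) \<partial>lborel)"
  proof (rule integral_abs_bound_integral)
    show "integrable lborel (\<lambda>x. indicator unit_cube x * (I - A x))"
      using cube int_A by (simp add: right_diff_distrib)
    show "integrable lborel (\<lambda>x. indicator unit_cube x * (M * D x))"
      using int_D by (simp add: mult.left_commute)
    show "\<bar>indicator unit_cube x * (I - A x)\<bar> \<le> indicator unit_cube x * (M * D x)" for x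
      using abs_integral_mult_translate_diff_le[OF w h_meas h_le, where x=x]
      by (simp add: I_def A_def D_def abs_mult indicator_def)
  qed
  finally show ?thesis
    by (simp add: I_def D_def set_lebesgue_integral_def mult.left_commute)
qed

lemma abs_scaled_gauss_integral_periodic_diff_le:
  fixes h :: "real ^ 'n \<Rightarrow> real"
  assumes [measurable]: "h \<in> borel_measurable borel" and h_le: "\<And>x. \<bar>h x\<bar> \<le> M"
    and per: "periodic1 h" and s: "0 < s"
  shows "\<bar>s ^ CARD('n) * (\<integral>z. gauss (s *\<^sub>R z) * h z \<partial>lborel) - (LINT x:unit_cube|lborel. h x)\<bar>
    \<le> M * (LINT x:unit_cube|lborel. \<integral>u. \<bar>gauss (u - s *\<^sub>R (x :: real ^ 'n)) - gauss u\<bar> \<partial>lborel)"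
proof -
  define w where "w z = s ^ CARD('n) * gauss (s *\<^sub>R z)" for z :: "real ^ 'n"
  have scale: "(\<integral>u. F u \<partial>lborel) = s ^ CARD('n) * (\<integral>z. F (s *\<^sub>R z) \<partial>lborel)"
    if "F \<in> borel_measurable borel" for F :: "real ^ 'n \<Rightarrow> real"
    using lborel_integral_affine[OF that, of s 0] s by simp
  have w: "integrable lborel w"
    using lborel_integrable_affine[OF integrable_gauss, of s 0] s
    unfolding w_def by (intro integrable_mult_right) simp
  have "(\<integral>z. w z \<partial>lborel) = 1"
    using scale[of gauss] by (simp add: w_def integral_gauss)
  moreover have "(\<integral>z. \<bar>w z - w (z - x)\<bar> \<partial>lborel)
      = (\<integral>u. \<bar>gauss (u - s *\<^sub>R x) - gauss u\<bar> \<partial>lborel)" for x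
    using scale[of "\<lambda>u. \<bar>gauss (u - s *\<^sub>R x) - gauss u\<bar>"] s
    by (simp add: w_def abs_mult scaleR_diff_right abs_minus_commute right_diff_distrib[symmetric])
  ultimately have "\<bar>(\<integral>z. w z * h z \<partial>lborel) - (LINT x:unit_cube|lborel. h x)\<bar>
      \<le> M * (LINT x:unit_cube|lborel. \<integral>u. \<bar>gauss (u - s *\<^sub>R (x :: real ^ 'n)) - gauss u\<bar> \<partial>lborel)"
    using abs_integral_mult_periodic_diff_le[OF w _ _ h_le per] by simp
  moreover have "(\<integral>z. w z * h z \<partial>lborel) = s ^ CARD('n) * (\<integral>z. gauss (s *\<^sub>R z) * h z \<partial>lborel)"
    by (simp add: w_def mult.assoc)
  ultimately show ?thesis
    by simp
qed

lemma tendsto_scaled_gauss_integral_periodic_diff: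
  fixes h :: "nat \<Rightarrow> real ^ 'n \<Rightarrow> real" and s :: "nat \<Rightarrow> real"
  assumes [measurable]: "\<And>m. h m \<in> borel_measurable borel" and h_le: "\<And>m x. \<bar>h m x\<bar> \<le> M"
    and per: "\<And>m. periodic1 (h m)" and s_pos: "\<And>m. 0 < s m" and s: "s \<longlonglongrightarrow> 0"
  shows "(\<lambda>m. s m ^ CARD('n) * (\<integral>z. gauss (s m *\<^sub>R z) * h m z \<partial>lborel)
    - (LINT x:unit_cube|lborel. h m x)) \<longlonglongrightarrow> 0"
proof (rule Lim_null_comparison)
  define D where "D a = (\<integral>u. \<bar>gauss (u - a) - gauss u\<bar> \<partial>lborel)" for a :: "real ^ 'n"
  show "\<forall>\<^sub>F m in sequentially. norm (s m ^ CARD('n) * (\<integral>z. gauss (s m *\<^sub>R z) * h m z \<partial>lborel)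
      - (LINT x:unit_cube|lborel. h m x)) \<le> M * (LINT x:unit_cube|lborel. D (s m *\<^sub>R x))"
    by (intro always_eventually allI)
      (simp add: D_def abs_scaled_gauss_integral_periodic_diff_le[OF _ h_le per s_pos])
  have D_le: "\<bar>D a\<bar> \<le> 2" for a
    using integral_abs_translate_diff_le[OF integrable_gauss, of a]
    by (simp add: D_def abs_minus_commute abs_of_nonneg gauss_nonneg integral_gauss)
  have "(\<lambda>m. D (s m *\<^sub>R x)) \<longlonglongrightarrow> 0" for x
  proof -
    have "(\<lambda>m. s m *\<^sub>R x) \<longlonglongrightarrow> 0"
      using tendsto_scaleR[OF s tendsto_const, of x] by simp
    then show ?thesis
      unfolding D_def
      by (rule tendsto_integral_abs_translate_diff[OF integrable_gauss continuous_on_gauss gauss_nonneg])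
  qed
  then have "(\<lambda>m. LINT x:unit_cube|lborel. D (s m *\<^sub>R x))
      \<longlonglongrightarrow> (LINT x:(unit_cube :: (real ^ 'n) set)|lborel. 0)"
    using D_le emeasure_unit_cube_finite
    by (intro tendsto_set_integral_bounded(2)) (auto simp: D_def)
  then show "(\<lambda>m. M * (LINT x:unit_cube|lborel. D (s m *\<^sub>R x))) \<longlonglongrightarrow> 0"
    by (simp add: tendsto_mult_right_zero)
qed

lemma gauss_kernel_integral_eq_scaled_gauss:
  fixes h :: "'a::euclidean_space \<Rightarrow> real"
  assumes [measurable]: "h \<in> borel_measurable borel" and h_le: "\<And>x. \<bar>h x\<bar> \<le> M" and e: "0 < e"
  shows "e powr (real DIM('a) / 2) * integral UNIV (\<lambda>x. exp (- pi * e * (norm x)\<^sup>2) * h x)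
    = sqrt e ^ DIM('a) * (\<integral>x. gauss (sqrt e *\<^sub>R x) * h x \<partial>lborel)"
proof -
  have "e powr (real DIM('a) / 2) = sqrt e ^ DIM('a)"
    using e by (simp add: powr_half_sqrt[symmetric] powr_powr powr_realpow[symmetric])
  moreover have "(\<lambda>x. exp (- pi * e * (norm x)\<^sup>2) * h x) = (\<lambda>x. gauss (sqrt e *\<^sub>R x) * h x)"
    using e by (simp add: gauss_def power_mult_distrib mult.assoc)
  moreover have "integrable lborel (\<lambda>x. gauss (sqrt e *\<^sub>R x) * h x)"
    using e lborel_integrable_affine[OF integrable_gauss, of "sqrt e" 0]
    by (intro integrable_mult_bounded[OF _ _ h_le]) auto
  ultimately show ?thesis
    by (simp only: integral_lborel)
qed

theorem lemma3p4:
  fixes f :: "real ^ 'n \<Rightarrow> real"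
    and g :: "nat \<Rightarrow> real ^ 'n \<Rightarrow> real"
    and g0 :: "real ^ 'n \<Rightarrow> real"
    and \<epsilon> :: "nat \<Rightarrow> real"
  assumes f_cont: "continuous_on UNIV f"
    and f_per: "periodic1 f"
    and g_cont: "\<And>m. continuous_on UNIV (g m)"
    and g_per: "\<And>m. periodic1 (g m)"
    and g_bdd: "\<exists>B. \<forall>m x. \<bar>g m x\<bar> \<le> B"
    and g_lim: "\<And>x. (\<lambda>m. g m x) \<longlonglongrightarrow> g0 x"
    and eps_pos: "\<And>m. \<epsilon> m > 0"
    and eps_lim: "\<epsilon> \<longlonglongrightarrow> 0"
  shows "(\<lambda>m. \<epsilon> m powr (real CARD('n) / 2) *
            integral UNIV (\<lambda>x. exp (- pi * \<epsilon> m * (norm x)\<^sup>2) * f x * g m x))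
         \<longlonglongrightarrow> integral unit_cube (\<lambda>x. f x * g0 x)"
proof -
  define h where "h m x = f x * g m x" for m x
  obtain Mf where Mf: "\<And>x. \<bar>f x\<bar> \<le> Mf"
    using periodic1_bounded[OF f_cont f_per] by (auto simp: bounded_iff)
  obtain B where B: "\<And>m x. \<bar>g m x\<bar> \<le> B"
    using g_bdd by blast
  have h_le: "\<bar>h m x\<bar> \<le> Mf * B" for m x
    using Mf[of x] B[of m x]
    by (auto simp: h_def abs_mult intro!: mult_mono order_trans[OF abs_ge_zero])
  have [measurable]: "f \<in> borel_measurable borel" "g m \<in> borel_measurable borel" for m
    using f_cont g_cont by (auto intro: borel_measurable_continuous_onI)
  have h_meas[measurable]: "h m \<in> borel_measurable borel" for m
    unfolding h_def by measurable
  have "\<epsilon> m powr (real CARD('n) / 2)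
        * integral UNIV (\<lambda>x. exp (- pi * \<epsilon> m * (norm x)\<^sup>2) * f x * g m x)
      = sqrt (\<epsilon> m) ^ CARD('n) * (\<integral>z. gauss (sqrt (\<epsilon> m) *\<^sub>R z) * h m z \<partial>lborel)" for m
    using gauss_kernel_integral_eq_scaled_gauss[OF h_meas[of m] h_le[of m] eps_pos[of m]]
    by (simp add: h_def mult.assoc)
  moreover have "(\<lambda>m. sqrt (\<epsilon> m) ^ CARD('n) * (\<integral>z. gauss (sqrt (\<epsilon> m) *\<^sub>R z) * h m z \<partial>lborel)
      - (LINT x:unit_cube|lborel. h m x)) \<longlonglongrightarrow> 0"
    using eps_pos tendsto_real_sqrt[OF eps_lim] f_per g_per
    by (intro tendsto_scaled_gauss_integral_periodic_diff[OF h_meas h_le])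
      (auto simp: h_def periodic1_mult)
  moreover have "(\<lambda>m. h m x) \<longlonglongrightarrow> f x * g0 x" for x
    unfolding h_def by (intro tendsto_intros g_lim)
  then have "set_integrable lborel unit_cube (\<lambda>x. f x * g0 x)"
    and "(\<lambda>m. LINT x:unit_cube|lborel. h m x) \<longlonglongrightarrow> (LINT x:unit_cube|lborel. f x * g0 x)"
    using h_le emeasure_unit_cube_finite
    by (intro tendsto_set_integral_bounded[where B="Mf * B"]; (measurable | simp))+
  ultimately show ?thesis
    using tendsto_add set_borel_integral_eq_integral(2) by fastforce
qed

end
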